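(* Let $\mathcal{F}:\mathcal{T}^Y\to\mathcal{T}^Z$ be a (holomorphic, projective) cover between trees of spheres with portrait $\mathbf{F}$ and of degree $D$. Let $v$ be an internal vertex of $T^Y$ with $\deg(v)=D$, and let $(f_n,y_n,z_n)_n$ be a sequence of rational maps marked by $\mathbf{F}$ converging to $\mathcal{F}$ via $(\phi^Y_n,\phi^Z_n)$. Then $\phi^Z_{n,F(v)}\circ f_n\circ(\phi^Y_{n,v})^{-1}:\mathbb{S}_v\to\mathbb{S}_{F(v)}$ converges uniformly on $\mathbb{S}_v$ to $f_v$.
   Context: Trees: finite connected graphs without cycles (vertices $V$, edges $2$-element subsets, $E_v$ the edges at $v$); leaves have valence $1$, the others are internal ($IV$); trees are stable (internal vertices have valence $\ge3$). For $e\in E_v$, $B_v(e)$ is the component of the tree minus $v$ containing $e$. A projective tree of spheres $\mathcal{T}^X$ marked by a finite set $X$ ($\ge3$ elements) is a tree $T^X$ with leaf set $X$ and, for each internal vertex $v$, a sphere $\mathbb{S}_v$ with a projective structure and an injection $i_v:E_v\to\mathbb{S}_v$; $X_v=i_v(E_v)$; $a_v(x)=i_v(e)$ for $x\in B_v(e)$. A holomorphic cover $\mathcal{F}:\mathcal{T}^Y\to\mathcal{T}^Z$: a map $F:T^Y\to T^Z$ sending vertices to vertices and edges $\{v,w\}$ to edges $\{F(v),F(w)\}$, $Y$ into $Z$ and $IV^Y$ into $IV^Z$, with holomorphic branched coverings $f_v:\mathbb{S}_v\to\mathbb{S}_{F(v)}$ ($v\in IV^Y$) which restrict to coverings $\mathbb{S}_v\setminus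 Y_v\to\mathbb{S}_{F(v)}\setminus Z_{F(v)}$, satisfy $f_v\circ i_v=i_{F(v)}\circ F$ on $E_v$, and have equal local degrees at both attaching points of an edge between internal vertices. $\deg(v)=\deg f_v$; for a leaf $y$ attached to internal $v$ by $e$, $\deg(y)=\deg_{i_v(e)}f_v$. The degree $D$ is $\sum_{v'\in F^{-1}(w)}\deg(v')$, independent of the vertex $w$. The portrait of $\mathcal{F}$ is $(F|_Y,\deg|_Y)$. A portrait of degree $D$ is $\mathbf{F}=(F,\deg)$, $F:Y\to Z$, $\deg:Y\to\mathbb{N}\setminus\{0\}$ with $\sum_{a\in Y}(\deg(a)-1)=2D-2$ and $\sum_{a\in F^{-1}(b)}\deg(a)=D$ for all $b\in Z$. A rational map marked by $\mathbf{F}$ is $(f,y,z)$ with $f$ rational of degree $D$, $y:Y\to\hat{\mathbb{C}}$ and $z:Z\to\hat{\mathbb{C}}$ injective, $f\circ y=z\circ F$ and $\deg_{y(a)}f=\deg(a)$. Convergence: $(f_n,y_n,z_n)\to\mathcal{F}$ via $(\phi^Y_n,\phi^Z_n)$ if the $(f_n,y_n,z_n)$ are marked by the portrait of $\mathcal{F}$ and for each $v\in IV^Y$, $w=F(v)$, there are projective isomorphisms $\phi^Y_{n,v}:\hat{\mathbb{C}}\to\mathbb{S}_v$, $\phi^Z_{n,w}:\hat{\mathbb{C}}\to\mathbb{S}_w$ with $\phi^Y_{n,v}\circ y_n\to a^Y_v$, $\phi^Z_{n,w}\circ z_n\to a^Z_w$, and $\phi^Z_{n,w}\circ f_n\circ(\phi^Y_{n,v})^{-1}\to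 f_v$ locally uniformly on $\mathbb{S}_v\setminus Y_v$. *)

theory Defs
  imports "HOL-Analysis.Analysis" "HOL-Computational_Algebra.Polynomial_Factorial"
begin

text \<open>The Riemann sphere is modelled as complex option: Some z is the finite point z,
  None is the point at infinity.  Its metric is the chordal metric.\<close>

type_synonym csphere = "complex option"

fun sdist :: "csphere \<Rightarrow> csphere \<Rightarrow> real" where
  "sdist (Some z) (Some w) = 2 * cmod (z - w) / sqrt ((1 + (cmod z)\<^sup>2) * (1 + (cmod w)\<^sup>2))"
| "sdist (Some z) None = 2 / sqrt (1 + (cmod z)\<^sup>2)"
| "sdist None (Some w) = 2 / sqrt (1 + (cmod w)\<^sup>2)"
| "sdist None None = 0"

definition rat_eval :: "complex poly \<Rightarrow> complex poly \<Rightarrow> csphere \<Rightarrow> csphere" where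
  "rat_eval p q a = (case a of
      Some z \<Rightarrow> (if poly q z = 0 then None else Some (poly p z / poly q z))
    | None \<Rightarrow> (if degree p > degree q then None
               else if degree p = degree q then Some (lead_coeff p / lead_coeff q)
               else Some 0))"

definition rational_map :: "nat \<Rightarrow> (csphere \<Rightarrow> csphere) \<Rightarrow> bool" where
  "rational_map D g \<longleftrightarrow> D \<ge> 1 \<and>
     (\<exists>p q. coprime p q \<and> max (degree p) (degree q) = D \<and> g = rat_eval p q)"

definition rat_rep :: "(csphere \<Rightarrow> csphere) \<Rightarrow> complex poly \<times> complex poly" where
  "rat_rep g = (SOME (p, q). coprime p q \<and> max (degree p) (degree q) \<ge> 1 \<and> g = rat_eval p q)"

definition rat_degree :: "(csphere \<Rightarrow> csphere) \<Rightarrow> nat" where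
  "rat_degree g = (case rat_rep g of (p, q) \<Rightarrow> max (degree p) (degree q))"

text \<open>Local degree of p/q at a point a (multiplicity of a as a solution of p/q = (p/q)(a)).\<close>
definition ldeg_pq :: "complex poly \<Rightarrow> complex poly \<Rightarrow> csphere \<Rightarrow> nat" where
  "ldeg_pq p q a = (case a of
      Some z \<Rightarrow> (case rat_eval p q (Some z) of
                   Some b \<Rightarrow> order z (p - smult b q)
                 | None \<Rightarrow> order z q)
    | None \<Rightarrow> (case rat_eval p q None of
                   Some b \<Rightarrow> max (degree p) (degree q) - degree (p - smult b q)
                 | None \<Rightarrow> max (degree p) (degree q) - degree q))"

definition locdeg :: "(csphere \<Rightarrow> csphere) \<Rightarrow> csphere \<Rightarrow> nat" where
  "locdeg g a = (case rat_rep g of (p, q) \<Rightarrow> ldeg_pq p q a)"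

definition moebius :: "(csphere \<Rightarrow> csphere) \<Rightarrow> bool" where
  "moebius g \<longleftrightarrow> rational_map 1 g"

definition adj :: "'v set set \<Rightarrow> ('v \<times> 'v) set" where
  "adj E = {(a, b). {a, b} \<in> E}"

definition edges_at :: "'v set set \<Rightarrow> 'v \<Rightarrow> 'v set set" where
  "edges_at E v = {e \<in> E. v \<in> e}"

definition is_cycle :: "'v set set \<Rightarrow> 'v list \<Rightarrow> bool" where
  "is_cycle E cs \<longleftrightarrow> length cs \<ge> 3 \<and> distinct cs \<and>
     (\<forall>k < length cs. {cs ! k, cs ! ((k + 1) mod length cs)} \<in> E)"

definition tree :: "'v set \<Rightarrow> 'v set set \<Rightarrow> bool" where
  "tree V E \<longleftrightarrow> finite V \<and>
     (\<forall>e\<in>E. \<exists>a b. a \<in> V \<and> b \<in> V \<and> a \<noteq> b \<and> e = {a, b}) \<and>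
     (\<forall>a\<in>V. \<forall>b\<in>V. (a, b) \<in> (adj E)\<^sup>*) \<and>
     \<not> (\<exists>cs. is_cycle E cs)"

text \<open>B_v(e): vertices of the component of the tree minus v containing the edge e at v.\<close>
definition branch :: "'v set \<Rightarrow> 'v set set \<Rightarrow> 'v \<Rightarrow> 'v set \<Rightarrow> 'v set" where
  "branch V E v e = {x \<in> V. \<exists>u. u \<noteq> v \<and> e = {v, u} \<and>
       (u, x) \<in> (adj E \<inter> ((V - {v}) \<times> (V - {v})))\<^sup>*}"

text \<open>A projective tree of spheres marked by X: tree (V,E) with leaf set X, stable,
  and for each internal vertex v an injection i v of the edges at v into the sphere
  S_v; each projective sphere S_v is identified with the Riemann sphere.\<close>
definition tree_of_spheres ::
  "'v set \<Rightarrow> 'v set set \<Rightarrow> 'v set \<Rightarrow> ('v \<Rightarrow> 'v set \<Rightarrow> csphere) \<Rightarrow> bool" where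
  "tree_of_spheres V E X i \<longleftrightarrow> tree V E \<and> X \<subseteq> V \<and> finite X \<and> card X \<ge> 3 \<and>
     (\<forall>x\<in>V. card (edges_at E x) = 1 \<longleftrightarrow> x \<in> X) \<and>
     (\<forall>v\<in>V - X. card (edges_at E v) \<ge> 3 \<and> inj_on (i v) (edges_at E v))"

definition Xset :: "'v set set \<Rightarrow> ('v \<Rightarrow> 'v set \<Rightarrow> csphere) \<Rightarrow> 'v \<Rightarrow> csphere set" where
  "Xset E i v = i v ` edges_at E v"

definition attach ::
  "'v set \<Rightarrow> 'v set set \<Rightarrow> ('v \<Rightarrow> 'v set \<Rightarrow> csphere) \<Rightarrow> 'v \<Rightarrow> 'v \<Rightarrow> csphere" where
  "attach V E i v x = i v (THE e. e \<in> edges_at E v \<and> x \<in> branch V E v e)"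

definition leaf_edge :: "'v set set \<Rightarrow> 'v \<Rightarrow> 'v set" where
  "leaf_edge E y = (THE e. e \<in> E \<and> y \<in> e)"

definition leaf_nbr :: "'v set set \<Rightarrow> 'v \<Rightarrow> 'v" where
  "leaf_nbr E y = (THE u. u \<in> leaf_edge E y \<and> u \<noteq> y)"

definition holo_cover ::
  "'v set \<Rightarrow> 'v set set \<Rightarrow> 'v set \<Rightarrow> ('v \<Rightarrow> 'v set \<Rightarrow> csphere) \<Rightarrow>
   'w set \<Rightarrow> 'w set set \<Rightarrow> 'w set \<Rightarrow> ('w \<Rightarrow> 'w set \<Rightarrow> csphere) \<Rightarrow>
   ('v \<Rightarrow> 'w) \<Rightarrow> ('v \<Rightarrow> csphere \<Rightarrow> csphere) \<Rightarrow> bool" where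
  "holo_cover VY EY Y iY VZ EZ Z iZ F f \<longleftrightarrow>
     tree_of_spheres VY EY Y iY \<and> tree_of_spheres VZ EZ Z iZ \<and>
     (\<forall>v\<in>VY. F v \<in> VZ) \<and>
     (\<forall>e\<in>EY. F ` e \<in> EZ) \<and>
     F ` Y \<subseteq> Z \<and> F ` (VY - Y) \<subseteq> VZ - Z \<and>
     (\<forall>v\<in>VY - Y.
        (\<exists>d. rational_map d (f v)) \<and>
        (\<forall>e\<in>edges_at EY v. f v (iY v e) = iZ (F v) (F ` e)) \<and>
        (\<forall>a. a \<notin> Xset EY iY v \<longrightarrow>
               f v a \<notin> Xset EZ iZ (F v) \<and> locdeg (f v) a = 1)) \<and>
     (\<forall>e\<in>EY. \<forall>v u. e = {v, u} \<and> v \<noteq> u \<and> v \<notin> Y \<and> u \<notin> Y \<longrightarrow>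
        locdeg (f v) (iY v e) = locdeg (f u) (iY u e))"

definition vdeg ::
  "'v set set \<Rightarrow> 'v set \<Rightarrow> ('v \<Rightarrow> 'v set \<Rightarrow> csphere) \<Rightarrow> ('v \<Rightarrow> csphere \<Rightarrow> csphere) \<Rightarrow> 'v \<Rightarrow> nat" where
  "vdeg EY Y iY f v = (if v \<in> Y
       then locdeg (f (leaf_nbr EY v)) (iY (leaf_nbr EY v) (leaf_edge EY v))
       else rat_degree (f v))"

definition holo_cover_deg ::
  "'v set \<Rightarrow> 'v set set \<Rightarrow> 'v set \<Rightarrow> ('v \<Rightarrow> 'v set \<Rightarrow> csphere) \<Rightarrow>
   'w set \<Rightarrow> 'w set set \<Rightarrow> 'w set \<Rightarrow> ('w \<Rightarrow> 'w set \<Rightarrow> csphere) \<Rightarrow>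
   ('v \<Rightarrow> 'w) \<Rightarrow> ('v \<Rightarrow> csphere \<Rightarrow> csphere) \<Rightarrow> nat \<Rightarrow> bool" where
  "holo_cover_deg VY EY Y iY VZ EZ Z iZ F f D \<longleftrightarrow>
     holo_cover VY EY Y iY VZ EZ Z iZ F f \<and>
     (\<forall>w\<in>VZ. (\<Sum>v\<in>{v \<in> VY. F v = w}. vdeg EY Y iY f v) = D)"

definition marked_rat ::
  "'v set \<Rightarrow> 'w set \<Rightarrow> ('v \<Rightarrow> 'w) \<Rightarrow> ('v \<Rightarrow> nat) \<Rightarrow> nat \<Rightarrow>
   (csphere \<Rightarrow> csphere) \<Rightarrow> ('v \<Rightarrow> csphere) \<Rightarrow> ('w \<Rightarrow> csphere) \<Rightarrow> bool" where
  "marked_rat Y Z F degY D g y z \<longleftrightarrow> rational_map D g \<and> inj_on y Y \<and> inj_on z Z \<and>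
     (\<forall>a\<in>Y. g (y a) = z (F a) \<and> locdeg g (y a) = degY a)"

definition sconv :: "(nat \<Rightarrow> csphere) \<Rightarrow> csphere \<Rightarrow> bool" where
  "sconv xs x \<longleftrightarrow> (\<lambda>n. sdist (xs n) x) \<longlonglongrightarrow> 0"

definition loc_unif_conv ::
  "csphere set \<Rightarrow> (nat \<Rightarrow> csphere \<Rightarrow> csphere) \<Rightarrow> (csphere \<Rightarrow> csphere) \<Rightarrow> bool" where
  "loc_unif_conv U gs g \<longleftrightarrow> (\<forall>p\<in>U. \<exists>r>0. {q. sdist p q < r} \<subseteq> U \<and>
     (\<forall>\<epsilon>>0. eventually (\<lambda>n. \<forall>q. sdist p q < r \<longrightarrow> sdist (gs n q) (g q) < \<epsilon>) sequentially))"

definition unif_conv :: "(nat \<Rightarrow> csphere \<Rightarrow> csphere) \<Rightarrow> (csphere \<Rightarrow> csphere) \<Rightarrow> bool" where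
  "unif_conv gs g \<longleftrightarrow>
     (\<forall>\<epsilon>>0. eventually (\<lambda>n. \<forall>q. sdist (gs n q) (g q) < \<epsilon>) sequentially)"

definition converges_to_cover ::
  "'v set \<Rightarrow> 'v set set \<Rightarrow> 'v set \<Rightarrow> ('v \<Rightarrow> 'v set \<Rightarrow> csphere) \<Rightarrow>
   'w set \<Rightarrow> 'w set set \<Rightarrow> 'w set \<Rightarrow> ('w \<Rightarrow> 'w set \<Rightarrow> csphere) \<Rightarrow>
   ('v \<Rightarrow> 'w) \<Rightarrow> ('v \<Rightarrow> csphere \<Rightarrow> csphere) \<Rightarrow> nat \<Rightarrow>
   (nat \<Rightarrow> csphere \<Rightarrow> csphere) \<Rightarrow> (nat \<Rightarrow> 'v \<Rightarrow> csphere) \<Rightarrow> (nat \<Rightarrow> 'w \<Rightarrow> csphere) \<Rightarrow>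
   (nat \<Rightarrow> 'v \<Rightarrow> csphere \<Rightarrow> csphere) \<Rightarrow> (nat \<Rightarrow> 'w \<Rightarrow> csphere \<Rightarrow> csphere) \<Rightarrow> bool" where
  "converges_to_cover VY EY Y iY VZ EZ Z iZ F f D gs ys zs phiY phiZ \<longleftrightarrow>
     (\<forall>n. marked_rat Y Z F (vdeg EY Y iY f) D (gs n) (ys n) (zs n)) \<and>
     (\<forall>v\<in>VY - Y.
        (\<forall>n. moebius (phiY n v) \<and> moebius (phiZ n (F v))) \<and>
        (\<forall>x\<in>Y. sconv (\<lambda>n. phiY n v (ys n x)) (attach VY EY iY v x)) \<and>
        (\<forall>x\<in>Z. sconv (\<lambda>n. phiZ n (F v) (zs n x)) (attach VZ EZ iZ (F v) x)) \<and>
        loc_unif_conv (- Xset EY iY v)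
          (\<lambda>n. phiZ n (F v) \<circ> gs n \<circ> inv (phiY n v)) (f v))"

end

theory Submission
  imports Defs "HOL-Computational_Algebra.Field_as_Ring"
begin

text \<open>In homogeneous coordinates a rational map of degree D is given by a pair of binary forms
  of degree D without common zero on \<open>\<complex>\<^sup>2 - {0}\<close>, and conjugating by Moebius maps
  keeps this form.  Normalise the coefficients of the forms representing the conjugated maps
  \<open>h\<^sub>n\<close>; by compactness every subsequence has a further subsequence whose coefficients
  converge to a pair \<open>(P, Q)\<close>.  Convergence of \<open>h\<^sub>n\<close> to \<open>f\<^sub>v = p/q\<close> off the finitely
  many attaching points forces \<open>P q = Q p\<close>, and since \<open>p, q\<close> are coprime of maximal degree
  D, \<open>(P, Q)\<close> is a nonzero multiple of \<open>(p, q)\<close>; in particular it has no common zero.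
  The chordal distance of two points is \<open>2 |det(a, b)| / (|a| |b|)\<close> in homogeneous
  coordinates, so coefficientwise convergence to a pair without common zero is uniform
  convergence on the sphere.\<close>

section \<open>Homogeneous coordinates on the Riemann sphere\<close>

definition hproj :: "complex \<times> complex \<Rightarrow> csphere" where
  "hproj x = (if snd x = 0 then None else Some (fst x / snd x))"

definition hdet :: "complex \<times> complex \<Rightarrow> complex \<times> complex \<Rightarrow> complex" where
  "hdet a b = fst a * snd b - snd a * fst b"

lemma Pair_neq_0_iff: "((a::complex), (b::complex)) \<noteq> 0 \<longleftrightarrow> a \<noteq> 0 \<or> b \<noteq> 0"
  by (simp add: zero_prod_def)

lemma hproj_scale: "t \<noteq> 0 \<Longrightarrow> hproj (t * a, t * b) = hproj (a, b)"
  by (simp add: hproj_def)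

lemma hproj_eq_iff:
  assumes "a \<noteq> 0" "b \<noteq> 0"
  shows "hproj a = hproj b \<longleftrightarrow> hdet a b = 0"
proof -
  obtain a1 a2 b1 b2 where "a = (a1, a2)" "b = (b1, b2)" by (cases a, cases b) auto
  with assms show ?thesis
    by (cases "a2 = 0"; cases "b2 = 0") (auto simp: hproj_def hdet_def Pair_neq_0_iff field_simps)
qed

lemma hproj_surj: "\<exists>x. x \<noteq> 0 \<and> hproj x = y"
proof (cases y)
  case None
  then show ?thesis by (intro exI[of _ "(1, 0)"]) (simp add: hproj_def zero_prod_def)
next
  case (Some u)
  then show ?thesis by (intro exI[of _ "(u, 1)"]) (simp add: hproj_def zero_prod_def)
qed

lemma hproj_surj_sphere: "\<exists>x. norm x = 1 \<and> hproj x = y"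
proof -
  obtain x where x: "x \<noteq> 0" "hproj x = y" using hproj_surj by blast
  define t where "t = 1 / norm x"
  have "norm (t *\<^sub>R x) = 1" using x by (simp add: t_def)
  moreover have "t *\<^sub>R x = (complex_of_real t * fst x, complex_of_real t * snd x)"
    by (cases x) (simp add: scaleR_conv_of_real)
  moreover have "complex_of_real t \<noteq> 0" using x by (simp add: t_def)
  ultimately show ?thesis using hproj_scale x by (metis prod.collapse)
qed

lemma norm_fst_le_norm: "norm (fst x) \<le> norm x"
  by (metis norm_fst_le prod.collapse)

lemma norm_snd_le_norm: "norm (snd x) \<le> norm x"
  by (metis norm_snd_le prod.collapse)

lemma hdet_bound: "cmod (hdet u v) \<le> 2 * norm u * norm v"
proof -
  have "cmod (hdet u v) \<le> cmod (fst u) * cmod (snd v) + cmod (snd u) * cmod (fst v)"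
    unfolding hdet_def by (metis norm_mult norm_triangle_ineq4)
  also have "\<dots> \<le> norm u * norm v + norm u * norm v"
    by (intro add_mono mult_mono norm_fst_le_norm norm_snd_le_norm) auto
  finally show ?thesis by simp
qed

lemma sdist_self [simp]: "sdist x x = 0"
  by (cases x) auto

lemma sdist_nonneg: "sdist x y \<ge> 0"
  by (cases x; cases y) auto

lemma sqrt_one_plus_cmod_div:
  "w \<noteq> 0 \<Longrightarrow> sqrt (1 + (cmod (z / w))\<^sup>2) = norm (z, w) / cmod w"
proof -
  assume w: "w \<noteq> 0"
  then have "1 + (cmod (z / w))\<^sup>2 = ((cmod z)\<^sup>2 + (cmod w)\<^sup>2) / (cmod w)\<^sup>2"
    by (simp add: norm_divide power_divide field_simps)
  then show ?thesis by (simp add: norm_Pair real_sqrt_divide)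
qed

lemma sdist_hproj:
  assumes "a \<noteq> 0" "b \<noteq> 0"
  shows "sdist (hproj a) (hproj b) = 2 * cmod (hdet a b) / (norm a * norm b)"
proof -
  obtain a1 a2 b1 b2 where ab: "a = (a1, a2)" "b = (b1, b2)" by (cases a, cases b) auto
  have pos: "norm a > 0" "norm b > 0" using assms by auto
  consider "a2 = 0" "b2 = 0" | "a2 = 0" "b2 \<noteq> 0" | "a2 \<noteq> 0" "b2 = 0" | "a2 \<noteq> 0" "b2 \<noteq> 0"
    by blast
  then show ?thesis
  proof cases
    case 1
    then show ?thesis using ab by (simp add: hproj_def hdet_def)
  next
    case 2
    then have "sdist (hproj a) (hproj b) = 2 / (norm b / cmod b2)"
      using ab by (simp add: hproj_def sqrt_one_plus_cmod_div)
    then show ?thesis using 2 ab assms pos by (simp add: hdet_def norm_mult Pair_neq_0_iff)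
  next
    case 3
    then have "sdist (hproj a) (hproj b) = 2 / (norm a / cmod a2)"
      using ab by (simp add: hproj_def sqrt_one_plus_cmod_div)
    then show ?thesis using 3 ab assms pos by (simp add: hdet_def norm_mult Pair_neq_0_iff)
  next
    case 4
    have "sdist (hproj a) (hproj b)
        = 2 * cmod (a1 / a2 - b1 / b2) / ((norm a / cmod a2) * (norm b / cmod b2))"
      using ab 4 by (simp add: hproj_def real_sqrt_mult sqrt_one_plus_cmod_div)
    also have "a1 / a2 - b1 / b2 = hdet a b / (a2 * b2)"
      using ab 4 by (simp add: hdet_def field_simps)
    finally show ?thesis using 4 pos by (simp add: norm_divide norm_mult field_simps)
  qed
qed

lemma sdist_hproj_le:
  assumes "a \<noteq> 0" "b \<noteq> 0"
  shows "sdist (hproj a) (hproj b) \<le> 4 * norm (a - b) / norm a"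
proof -
  have pos: "norm a > 0" "norm b > 0" using assms by auto
  have "hdet a b = hdet (a - b) b" by (simp add: hdet_def algebra_simps)
  then have "sdist (hproj a) (hproj b) = 2 * cmod (hdet (a - b) b) / (norm a * norm b)"
    using sdist_hproj[OF assms] by simp
  also have "\<dots> \<le> 2 * (2 * norm (a - b) * norm b) / (norm a * norm b)"
    using pos by (intro divide_right_mono mult_left_mono hdet_bound) auto
  also have "\<dots> = 4 * norm (a - b) / norm a" using pos by (simp add: field_simps)
  finally show ?thesis .
qed

lemma hproj_eq_of_tendsto:
  assumes lim: "a \<longlonglongrightarrow> l" and l: "l \<noteq> 0" and a: "\<And>j. a j \<noteq> 0" and b: "b \<noteq> 0"
    and d: "(\<lambda>j. sdist (hproj (a j)) (hproj b)) \<longlonglongrightarrow> 0"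
  shows "hproj l = hproj b"
proof -
  have "(\<lambda>j. cmod (hdet (a j) b)) = (\<lambda>j. sdist (hproj (a j)) (hproj b) * (norm (a j) * norm b) / 2)"
    using sdist_hproj[OF a b] a b by (simp add: field_simps)
  moreover have "(\<lambda>j. sdist (hproj (a j)) (hproj b) * (norm (a j) * norm b) / 2) \<longlonglongrightarrow> 0 * (norm l * norm b) / 2"
    by (intro tendsto_intros d lim) auto
  ultimately have "(\<lambda>j. cmod (hdet (a j) b)) \<longlonglongrightarrow> 0" by simp
  moreover have "(\<lambda>j. cmod (hdet (a j) b)) \<longlonglongrightarrow> cmod (hdet l b)"
    unfolding hdet_def by (intro tendsto_intros tendsto_fst[OF lim] tendsto_snd[OF lim])
  ultimately have "0 = cmod (hdet l b)" by (rule LIMSEQ_unique)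
  then show ?thesis using hproj_eq_iff[OF l b] by simp
qed

section \<open>Binary forms\<close>

definition hpoly :: "nat \<Rightarrow> complex poly \<Rightarrow> complex \<times> complex \<Rightarrow> complex" where
  "hpoly m r x = (\<Sum>k\<le>m. coeff r k * fst x ^ k * snd x ^ (m - k))"

lemma hpoly_Pair_0: "hpoly m r (z, 0) = coeff r m * z ^ m"
proof -
  have "hpoly m r (z, 0) = (\<Sum>k\<in>{m}. coeff r k * z ^ k * 0 ^ (m - k))"
    unfolding hpoly_def fst_conv snd_conv by (rule sum.mono_neutral_right) auto
  then show ?thesis by simp
qed

lemma hpoly_Pair:
  assumes "w \<noteq> 0" "degree r \<le> m"
  shows "hpoly m r (z, w) = w ^ m * poly r (z / w)"
proof -
  have "poly r (z / w) = (\<Sum>k\<le>m. coeff r k * (z / w) ^ k)"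
    unfolding poly_altdef using assms(2) by (intro sum.mono_neutral_left) (auto simp: coeff_eq_0)
  then have "w ^ m * poly r (z / w) = (\<Sum>k\<le>m. coeff r k * (w ^ m * (z / w) ^ k))"
    by (simp add: sum_distrib_left algebra_simps)
  also have "\<dots> = (\<Sum>k\<le>m. coeff r k * z ^ k * w ^ (m - k))"
  proof (rule sum.cong)
    fix k assume "k \<in> {..m}"
    then have "w ^ m = w ^ k * w ^ (m - k)" by (simp flip: power_add)
    then show "coeff r k * (w ^ m * (z / w) ^ k) = coeff r k * z ^ k * w ^ (m - k)"
      using assms(1) by (simp add: power_divide field_simps)
  qed simp
  finally show ?thesis by (simp add: hpoly_def)
qed

lemma hpoly_Pair_1: "degree r \<le> m \<Longrightarrow> hpoly m r (z, 1) = poly r z"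
  using hpoly_Pair[of 1 r m z] by simp

lemma hpoly_add: "hpoly m (r + s) x = hpoly m r x + hpoly m s x"
  by (simp add: hpoly_def sum.distrib algebra_simps)

lemma hpoly_smult: "hpoly m (smult c r) x = c * hpoly m r x"
  by (simp add: hpoly_def sum_distrib_left algebra_simps)

lemma hpoly_diff: "hpoly m (r - s) x = hpoly m r x - hpoly m s x"
  by (simp add: hpoly_def sum_subtractf algebra_simps)

lemma hpoly_0 [simp]: "hpoly m 0 x = 0"
  by (simp add: hpoly_def)

lemma hpoly_sum: "finite A \<Longrightarrow> hpoly m (\<Sum>i\<in>A. r i) x = (\<Sum>i\<in>A. hpoly m (r i) x)"
  by (induction A rule: finite_induct) (simp_all add: hpoly_add)

lemma coeff_mult_degree_le:
  assumes "degree r \<le> m" "degree s \<le> m'"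
  shows "coeff (r * s) (m + m') = coeff r m * coeff s m'"
proof (cases "degree r = m \<and> degree s = m'")
  case True
  then show ?thesis using coeff_mult_degree_sum[of r s] by simp
next
  case False
  then have "degree r < m \<or> degree s < m'" using assms by auto
  moreover have "degree (r * s) \<le> degree r + degree s" by (rule degree_mult_le)
  ultimately show ?thesis using assms by (auto simp: coeff_eq_0)
qed

lemma hpoly_mult:
  assumes "degree r \<le> m" "degree s \<le> m'"
  shows "hpoly (m + m') (r * s) x = hpoly m r x * hpoly m' s x"
proof (cases x)
  case (Pair z w)
  show ?thesis
  proof (cases "w = 0")
    case True
    then show ?thesis using Pair coeff_mult_degree_le[OF assms] by (simp add: hpoly_Pair_0 power_add)
  next
    case False
    have "degree (r * s) \<le> m + m'" using degree_mult_le[of r s] assms by linarith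
    then show ?thesis using Pair False assms by (simp add: hpoly_Pair power_add)
  qed
qed

lemma hpoly_linear: "hpoly 1 [:b, a:] (z, w) = a * z + b * w"
proof -
  have "{..1::nat} = {0, 1}" by auto
  then show ?thesis unfolding hpoly_def by simp
qed

lemma degree_power_linear: "degree (r ^ k) \<le> k" if "degree (r::complex poly) \<le> 1"
  using degree_power_le[of r k] that by (simp add: order.trans)

lemma hpoly_power_linear: "hpoly k ([:b, a:] ^ k) (z, w) = (a * z + b * w) ^ k"
proof (induction k)
  case 0
  then show ?case by (simp add: hpoly_def)
next
  case (Suc k)
  have "hpoly (1 + k) ([:b, a:] * [:b, a:] ^ k) (z, w) = hpoly 1 [:b, a:] (z, w) * hpoly k ([:b, a:] ^ k) (z, w)"
    by (rule hpoly_mult) (simp_all add: degree_power_linear)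
  then show ?case by (simp only: Suc.IH hpoly_linear power_Suc plus_1_eq_Suc)
qed

lemma hpoly_linear_subst:
  fixes P :: "complex poly" and a b c d :: complex
  obtains P' where "degree P' \<le> D"
    "\<And>z w. hpoly D P (a * z + b * w, c * z + d * w) = hpoly D P' (z, w)"
proof -
  define P' where "P' = (\<Sum>k\<le>D. smult (coeff P k) ([:b, a:] ^ k * [:d, c:] ^ (D - k)))"
  have deg: "degree ([:b, a:] ^ k) \<le> k" "degree ([:d, c:] ^ (D - k)) \<le> D - k" for k
    by (simp_all add: degree_power_linear)
  have "degree ([:b, a:] ^ k * [:d, c:] ^ (D - k)) \<le> D" if "k \<le> D" for k
    using degree_mult_le[of "[:b, a:] ^ k" "[:d, c:] ^ (D - k)"] deg[of k] that by linarith
  then have "degree P' \<le> D" unfolding P'_def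
    by (intro degree_sum_le) (auto intro: order.trans[OF degree_smult_le])
  moreover have "hpoly D P (a * z + b * w, c * z + d * w) = hpoly D P' (z, w)" for z w
  proof -
    have "hpoly D ([:b, a:] ^ k * [:d, c:] ^ (D - k)) (z, w) = (a * z + b * w) ^ k * (c * z + d * w) ^ (D - k)"
      if "k \<le> D" for k
      using hpoly_mult[OF deg(1)[of k] deg(2)[of k], where x="(z, w)"] that by (simp add: hpoly_power_linear)
    then have "hpoly D P' (z, w) = (\<Sum>k\<le>D. coeff P k * ((a * z + b * w) ^ k * (c * z + d * w) ^ (D - k)))"
      unfolding P'_def by (simp add: hpoly_sum hpoly_smult)
    then show ?thesis by (simp add: hpoly_def mult.assoc)
  qed
  ultimately show ?thesis by (rule that)
qed

lemma hpoly_norm_diff_le: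
  assumes "norm x \<le> 1"
  shows "cmod (hpoly D A x - hpoly D B x) \<le> (\<Sum>k\<le>D. cmod (coeff A k - coeff B k))"
proof -
  have x: "cmod (fst x) \<le> 1" "cmod (snd x) \<le> 1"
    using assms norm_fst_le_norm[of x] norm_snd_le_norm[of x] by auto
  have "hpoly D A x - hpoly D B x = hpoly D (A - B) x" by (simp add: hpoly_diff)
  also have "cmod \<dots> \<le> (\<Sum>k\<le>D. cmod (coeff (A - B) k * fst x ^ k * snd x ^ (D - k)))"
    unfolding hpoly_def by (rule norm_sum)
  also have "\<dots> \<le> (\<Sum>k\<le>D. cmod (coeff A k - coeff B k))"
  proof (rule sum_mono)
    fix k
    have "cmod (fst x ^ k) * cmod (snd x ^ (D - k)) \<le> 1"
      using x by (auto simp: norm_power power_le_one intro: mult_le_one)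
    then show "cmod (coeff (A - B) k * fst x ^ k * snd x ^ (D - k)) \<le> cmod (coeff A k - coeff B k)"
      by (simp add: norm_mult mult.assoc mult_left_le)
  qed
  finally show ?thesis .
qed

lemma hpoly_pair_norm_diff_le:
  assumes "norm x \<le> 1"
  shows "norm ((hpoly D P x, hpoly D Q x) - (hpoly D P' x, hpoly D Q' x))
    \<le> (\<Sum>k\<le>D. cmod (coeff P k - coeff P' k)) + (\<Sum>k\<le>D. cmod (coeff Q k - coeff Q' k))"
proof -
  have "norm ((hpoly D P x, hpoly D Q x) - (hpoly D P' x, hpoly D Q' x))
      \<le> cmod (hpoly D P x - hpoly D P' x) + cmod (hpoly D Q x - hpoly D Q' x)"
    by (simp add: norm_Pair_le)
  also have "\<dots> \<le> (\<Sum>k\<le>D. cmod (coeff P k - coeff P' k)) + (\<Sum>k\<le>D. cmod (coeff Q k - coeff Q' k))"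
    using assms by (intro add_mono hpoly_norm_diff_le)
  finally show ?thesis .
qed

section \<open>Rational maps as pairs of binary forms\<close>

definition hom_rep :: "nat \<Rightarrow> complex poly \<Rightarrow> complex poly \<Rightarrow> (csphere \<Rightarrow> csphere) \<Rightarrow> bool" where
  "hom_rep D P Q g \<longleftrightarrow> (\<forall>x. x \<noteq> 0 \<longrightarrow>
     (hpoly D P x, hpoly D Q x) \<noteq> 0 \<and> g (hproj x) = hproj (hpoly D P x, hpoly D Q x))"

lemma hom_rep_smult:
  assumes "hom_rep D P Q g" "c \<noteq> 0"
  shows "hom_rep D (smult c P) (smult c Q) g"
  using assms by (auto simp: hom_rep_def hpoly_smult hproj_scale Pair_neq_0_iff)

lemma coprime_imp_no_common_root:
  fixes p q :: "complex poly"
  assumes "coprime p q"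
  shows "poly p u \<noteq> 0 \<or> poly q u \<noteq> 0"
proof (rule ccontr)
  assume "\<not> ?thesis"
  then have "[:-u, 1:] dvd p" "[:-u, 1:] dvd q" by (auto simp: poly_eq_0_iff_dvd)
  then have "is_unit [:-u, 1:]" using assms coprime_common_divisor by blast
  then show False by (simp add: is_unit_iff_degree)
qed

lemma hom_rep_rat_eval:
  fixes p q :: "complex poly"
  assumes cp: "coprime p q" and md: "max (degree p) (degree q) = D" and D: "D \<ge> 1"
  shows "hom_rep D p q (rat_eval p q)"
  unfolding hom_rep_def
proof (intro allI impI)
  fix x :: "complex \<times> complex" assume x: "x \<noteq> 0"
  obtain z w where xzw: "x = (z, w)" by (cases x)
  have dp: "degree p \<le> D" "degree q \<le> D" using md by auto
  show "(hpoly D p x, hpoly D q x) \<noteq> 0 \<and> rat_eval p q (hproj x) = hproj (hpoly D p x, hpoly D q x)"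
  proof (cases "w = 0")
    case False
    have h: "hpoly D p x = w ^ D * poly p (z / w)" "hpoly D q x = w ^ D * poly q (z / w)"
      using hpoly_Pair[OF False dp(1)] hpoly_Pair[OF False dp(2)] xzw by auto
    have "w ^ D \<noteq> 0" using False by simp
    then show ?thesis
      using coprime_imp_no_common_root[OF cp, of "z / w"] False xzw
      unfolding h by (simp add: rat_eval_def hproj_def Pair_neq_0_iff)
  next
    case True
    then have "z ^ D \<noteq> 0" using x xzw by (auto simp: zero_prod_def)
    moreover have "hproj x = None" using True xzw by (simp add: hproj_def)
    moreover have "hpoly D p x = coeff p D * z ^ D" "hpoly D q x = coeff q D * z ^ D"
      using xzw True by (auto simp: hpoly_Pair_0)
    moreover have "degree p = D \<Longrightarrow> coeff p D \<noteq> 0" "degree q = D \<Longrightarrow> coeff q D \<noteq> 0"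
      using D by (metis leading_coeff_0_iff not_one_le_zero degree_0)+
    moreover have "degree p < D \<Longrightarrow> coeff p D = 0" "degree q < D \<Longrightarrow> coeff q D = 0"
      by (simp_all add: coeff_eq_0)
    ultimately show ?thesis using md dp
      by (cases "degree p = D"; cases "degree q = D") (auto simp: rat_eval_def hproj_def Pair_neq_0_iff)
  qed
qed

lemma linear_Pair_neq_0:
  fixes a b c d z w :: complex
  assumes "a * d - b * c \<noteq> 0" "(z, w) \<noteq> 0"
  shows "(a * z + b * w, c * z + d * w) \<noteq> 0"
proof
  assume "(a * z + b * w, c * z + d * w) = 0"
  then have "a * z + b * w = 0" "c * z + d * w = 0" by (auto simp: zero_prod_def)
  moreover have "(a * d - b * c) * z = d * (a * z + b * w) - b * (c * z + d * w)"
    "(a * d - b * c) * w = a * (c * z + d * w) - c * (a * z + b * w)" by (simp_all add: algebra_simps)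
  ultimately show False using assms by (simp add: zero_prod_def)
qed

lemma moebius_linear:
  assumes "moebius \<phi>"
  obtains a b c d where "a * d - b * c \<noteq> (0::complex)"
    and "\<And>z w. (z, w) \<noteq> 0 \<Longrightarrow> \<phi> (hproj (z, w)) = hproj (a * z + b * w, c * z + d * w)"
proof -
  obtain p q where cp: "coprime p q" "max (degree p) (degree q) = 1" "\<phi> = rat_eval p q"
    using assms unfolding moebius_def rational_map_def by blast
  have r: "hom_rep 1 p q \<phi>" using hom_rep_rat_eval[OF cp(1,2)] cp(3) by simp
  define a b c d where "a = coeff p 1" "b = coeff p 0" "c = coeff q 1" "d = coeff q 0"
  have "p = [:b, a:]" "q = [:d, c:]"
    using cp(2) unfolding a_b_c_d_def by (auto intro!: poly_eqI simp: coeff_pCons coeff_eq_0 split: nat.split)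
  then have L: "(a * z + b * w, c * z + d * w) \<noteq> 0 \<and> \<phi> (hproj (z, w)) = hproj (a * z + b * w, c * z + d * w)"
    if "(z, w) \<noteq> 0" for z w
    using r that unfolding hom_rep_def by (metis hpoly_linear)
  have "a * d - b * c \<noteq> 0"
  proof
    assume det: "a * d - b * c = 0"
    \<comment> \<open>a nonzero kernel vector would be mapped to the excluded point 0\<close>
    have "(d, -c) = 0 \<and> (b, -a) = 0"
      using L[of d "-c"] L[of b "-a"] det by (auto simp: algebra_simps zero_prod_def)
    then show False using L[of 1 0] by (simp add: zero_prod_def)
  qed
  then show ?thesis by (rule that) (use L in blast)
qed

lemma inv_moebius_linear:
  assumes "moebius \<psi>"
  obtains a b c d where "a * d - b * c \<noteq> (0::complex)"
    and "\<And>z w. (z, w) \<noteq> 0 \<Longrightarrow> inv \<psi> (hproj (z, w)) = hproj (a * z + b * w, c * z + d * w)"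
proof -
  obtain A B C E where det: "A * E - B * C \<noteq> (0::complex)"
    and L: "\<And>z w. (z, w) \<noteq> 0 \<Longrightarrow> \<psi> (hproj (z, w)) = hproj (A * z + B * w, C * z + E * w)"
    by (rule moebius_linear[OF assms]) (rule that)
  have "inj \<psi>"
  proof (rule injI)
    fix y1 y2 assume eq: "\<psi> y1 = \<psi> y2"
    obtain z1 w1 where 1: "(z1, w1) \<noteq> 0" "hproj (z1, w1) = y1"
      using hproj_surj[of y1] by (auto simp: split_paired_Ex)
    obtain z2 w2 where 2: "(z2, w2) \<noteq> 0" "hproj (z2, w2) = y2"
      using hproj_surj[of y2] by (auto simp: split_paired_Ex)
    have "hproj (A * z1 + B * w1, C * z1 + E * w1) = hproj (A * z2 + B * w2, C * z2 + E * w2)"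
      using eq L[OF 1(1)] L[OF 2(1)] 1(2) 2(2) by simp
    then have "hdet (A * z1 + B * w1, C * z1 + E * w1) (A * z2 + B * w2, C * z2 + E * w2) = 0"
      using hproj_eq_iff linear_Pair_neq_0[OF det 1(1)] linear_Pair_neq_0[OF det 2(1)] by blast
    moreover have "hdet (A * z1 + B * w1, C * z1 + E * w1) (A * z2 + B * w2, C * z2 + E * w2)
        = (A * E - B * C) * hdet (z1, w1) (z2, w2)"
      by (simp add: hdet_def algebra_simps)
    ultimately have "hdet (z1, w1) (z2, w2) = 0" using det by simp
    then show "y1 = y2" using hproj_eq_iff[OF 1(1) 2(1)] 1(2) 2(2) by blast
  qed
  have det': "E * A - (-B) * (-C) \<noteq> 0" using det by (simp add: algebra_simps)
  have "inv \<psi> (hproj (z, w)) = hproj (E * z + (-B) * w, (-C) * z + A * w)" if "(z, w) \<noteq> 0" for z w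
  proof -
    have "\<psi> (hproj (E * z + (-B) * w, (-C) * z + A * w)) =
        hproj (A * (E * z + (-B) * w) + B * ((-C) * z + A * w), C * (E * z + (-B) * w) + E * ((-C) * z + A * w))"
      by (rule L[OF linear_Pair_neq_0[OF det' that]])
    also have "\<dots> = hproj ((A * E - B * C) * z, (A * E - B * C) * w)"
      by (simp add: algebra_simps)
    also have "\<dots> = hproj (z, w)" by (rule hproj_scale[OF det])
    finally show ?thesis by (metis inv_f_f[OF \<open>inj \<psi>\<close>])
  qed
  then show ?thesis by (rule that[OF det'])
qed

lemma hom_rep_moebius_conj:
  assumes r: "hom_rep D P Q g" and "moebius \<phi>" "moebius \<psi>"
  obtains P' Q' where "degree P' \<le> D" "degree Q' \<le> D" "hom_rep D P' Q' (\<phi> \<circ> g \<circ> inv \<psi>)"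
proof -
  obtain \<alpha> \<beta> \<gamma> \<delta> where det1: "\<alpha> * \<delta> - \<beta> * \<gamma> \<noteq> (0::complex)"
    and L1: "\<And>z w. (z, w) \<noteq> 0 \<Longrightarrow> \<phi> (hproj (z, w)) = hproj (\<alpha> * z + \<beta> * w, \<gamma> * z + \<delta> * w)"
    by (rule moebius_linear[OF assms(2)]) (rule that)
  obtain a b c d where det2: "a * d - b * c \<noteq> (0::complex)"
    and L2: "\<And>z w. (z, w) \<noteq> 0 \<Longrightarrow> inv \<psi> (hproj (z, w)) = hproj (a * z + b * w, c * z + d * w)"
    by (rule inv_moebius_linear[OF assms(3)]) (rule that)
  obtain P1 where dP: "degree P1 \<le> D"
    and sP: "\<And>z w. hpoly D P (a * z + b * w, c * z + d * w) = hpoly D P1 (z, w)"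
    by (rule hpoly_linear_subst) (rule that)
  obtain Q1 where dQ: "degree Q1 \<le> D"
    and sQ: "\<And>z w. hpoly D Q (a * z + b * w, c * z + d * w) = hpoly D Q1 (z, w)"
    by (rule hpoly_linear_subst) (rule that)
  define P' where "P' = smult \<alpha> P1 + smult \<beta> Q1"
  define Q' where "Q' = smult \<gamma> P1 + smult \<delta> Q1"
  have "degree P' \<le> D" "degree Q' \<le> D"
    unfolding P'_def Q'_def using dP dQ by (meson degree_add_le degree_smult_le order.trans)+
  moreover have "hom_rep D P' Q' (\<phi> \<circ> g \<circ> inv \<psi>)"
    unfolding hom_rep_def
  proof (intro allI impI)
    fix x :: "complex \<times> complex" assume x: "x \<noteq> 0"
    obtain z w where xzw: "x = (z, w)" by (cases x)
    have "(a * z + b * w, c * z + d * w) \<noteq> 0" using linear_Pair_neq_0[OF det2] x xzw by simp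
    then have "(hpoly D P (a * z + b * w, c * z + d * w), hpoly D Q (a * z + b * w, c * z + d * w)) \<noteq> 0 \<and>
        g (hproj (a * z + b * w, c * z + d * w)) =
        hproj (hpoly D P (a * z + b * w, c * z + d * w), hpoly D Q (a * z + b * w, c * z + d * w))"
      using r unfolding hom_rep_def by blast
    then have ne: "(hpoly D P1 (z, w), hpoly D Q1 (z, w)) \<noteq> 0"
      and g: "g (hproj (a * z + b * w, c * z + d * w)) = hproj (hpoly D P1 (z, w), hpoly D Q1 (z, w))"
      unfolding sP sQ by blast+
    have "(\<phi> \<circ> g \<circ> inv \<psi>) (hproj x) = \<phi> (hproj (hpoly D P1 (z, w), hpoly D Q1 (z, w)))"
      using L2[of z w] x xzw g by simp
    also have "\<dots> = hproj (hpoly D P' x, hpoly D Q' x)"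
      using L1[OF ne] xzw by (simp add: P'_def Q'_def hpoly_add hpoly_smult)
    finally show "(hpoly D P' x, hpoly D Q' x) \<noteq> 0 \<and>
        (\<phi> \<circ> g \<circ> inv \<psi>) (hproj x) = hproj (hpoly D P' x, hpoly D Q' x)"
      using linear_Pair_neq_0[OF det1 ne] xzw by (simp add: P'_def Q'_def hpoly_add hpoly_smult)
  qed
  ultimately show ?thesis by (rule that)
qed

lemma hom_rep_lower_bound:
  assumes "hom_rep D P Q g"
  obtains m where "m > 0" "\<And>x. norm x = 1 \<Longrightarrow> m \<le> norm (hpoly D P x, hpoly D Q x)"
proof -
  define N where "N x = norm (hpoly D P x, hpoly D Q x)" for x
  have "continuous_on (sphere 0 1) N" unfolding N_def hpoly_def by (intro continuous_intros)
  moreover have "(1, 0) \<in> sphere (0::complex \<times> complex) 1" by (simp add: norm_Pair)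
  ultimately obtain x0 where x0: "x0 \<in> sphere 0 1" "\<And>y. y \<in> sphere 0 1 \<Longrightarrow> N x0 \<le> N y"
    using continuous_attains_inf[OF compact_sphere] by blast
  have "x0 \<noteq> 0" using x0(1) by auto
  then have "(hpoly D P x0, hpoly D Q x0) \<noteq> 0" using assms unfolding hom_rep_def by blast
  then have "N x0 > 0" by (simp add: N_def)
  then show ?thesis by (rule that[of "N x0"]) (use x0(2) in \<open>simp add: N_def\<close>)
qed

definition coeff_norm :: "nat \<Rightarrow> complex poly \<Rightarrow> complex poly \<Rightarrow> real" where
  "coeff_norm D P Q = (\<Sum>k\<le>D. cmod (coeff P k) + cmod (coeff Q k))"

lemma hom_rep_normalize:
  assumes d: "degree P \<le> D" "degree Q \<le> D" and r: "hom_rep D P Q g"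
  obtains P' Q' where "degree P' \<le> D" "degree Q' \<le> D" "hom_rep D P' Q' g" "coeff_norm D P' Q' = 1"
proof -
  have "P \<noteq> 0 \<or> Q \<noteq> 0" using r unfolding hom_rep_def by (auto simp: zero_prod_def hpoly_def)
  then obtain k where k: "k \<le> D" "coeff P k \<noteq> 0 \<or> coeff Q k \<noteq> 0"
    using d by (metis leading_coeff_0_iff)
  then have pos: "0 < cmod (coeff P k) + cmod (coeff Q k)" by (auto simp: add_pos_nonneg add_nonneg_pos)
  have N: "coeff_norm D P Q > 0"
    unfolding coeff_norm_def by (rule sum_pos2[of "{..D}" k]) (use k pos in auto)
  define t where "t = complex_of_real (1 / coeff_norm D P Q)"
  have "coeff_norm D (smult t P) (smult t Q) = cmod t * coeff_norm D P Q"
    by (simp add: coeff_norm_def norm_mult sum_distrib_left distrib_left)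
  then have "coeff_norm D (smult t P) (smult t Q) = 1" using N by (simp add: t_def norm_divide)
  moreover have "t \<noteq> 0" using N by (simp add: t_def)
  moreover have "degree (smult t P) \<le> D" "degree (smult t Q) \<le> D"
    using d by (auto intro: order.trans[OF degree_smult_le])
  ultimately show ?thesis using hom_rep_smult[OF r] by (intro that[of "smult t P" "smult t Q"])
qed

lemma normalized_hom_reps_moebius_conj:
  assumes "\<And>n. rational_map D (g n)" "\<And>n. moebius (\<phi> n)" "\<And>n. moebius (\<psi> n)"
  obtains P Q where "\<And>n. degree (P n) \<le> D" "\<And>n. degree (Q n) \<le> D"
    "\<And>n. hom_rep D (P n) (Q n) (\<phi> n \<circ> g n \<circ> inv (\<psi> n))" "\<And>n. coeff_norm D (P n) (Q n) = 1"
proof -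
  have "\<exists>PQ. degree (fst PQ) \<le> D \<and> degree (snd PQ) \<le> D \<and>
      hom_rep D (fst PQ) (snd PQ) (\<phi> n \<circ> g n \<circ> inv (\<psi> n)) \<and> coeff_norm D (fst PQ) (snd PQ) = 1" for n
  proof -
    obtain p q where "coprime p q" "max (degree p) (degree q) = D" "g n = rat_eval p q" "D \<ge> 1"
      using assms(1)[of n] unfolding rational_map_def by blast
    then have "hom_rep D p q (g n)" by (simp add: hom_rep_rat_eval)
    then obtain P Q where "degree P \<le> D" "degree Q \<le> D" "hom_rep D P Q (\<phi> n \<circ> g n \<circ> inv (\<psi> n))"
      by (rule hom_rep_moebius_conj[OF _ assms(2,3)]) (rule that)
    then obtain P' Q' where "degree P' \<le> D" "degree Q' \<le> D"
      "hom_rep D P' Q' (\<phi> n \<circ> g n \<circ> inv (\<psi> n))" "coeff_norm D P' Q' = 1"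
      by (rule hom_rep_normalize) (rule that)
    then show ?thesis by (intro exI[of _ "(P', Q')"]) simp
  qed
  then have "\<exists>PQ. \<forall>n. degree (fst (PQ n)) \<le> D \<and> degree (snd (PQ n)) \<le> D \<and>
      hom_rep D (fst (PQ n)) (snd (PQ n)) (\<phi> n \<circ> g n \<circ> inv (\<psi> n)) \<and> coeff_norm D (fst (PQ n)) (snd (PQ n)) = 1"
    by (intro choice allI)
  then obtain PQ where "\<forall>n. degree (fst (PQ n)) \<le> D \<and> degree (snd (PQ n)) \<le> D \<and>
      hom_rep D (fst (PQ n)) (snd (PQ n)) (\<phi> n \<circ> g n \<circ> inv (\<psi> n)) \<and> coeff_norm D (fst (PQ n)) (snd (PQ n)) = 1"
    by blast
  then show ?thesis by (intro that[of "\<lambda>n. fst (PQ n)" "\<lambda>n. snd (PQ n)"]) simp_all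
qed

section \<open>Limits of representing forms\<close>

lemma unif_conv_of_coeff_tendsto:
  assumes R: "\<And>j. hom_rep D (P j) (Q j) (h j)" and RL: "hom_rep D PL QL g"
    and cP: "\<And>k. (\<lambda>j. coeff (P j) k) \<longlonglongrightarrow> coeff PL k"
    and cQ: "\<And>k. (\<lambda>j. coeff (Q j) k) \<longlonglongrightarrow> coeff QL k"
  shows "unif_conv h g"
  unfolding unif_conv_def
proof (intro allI impI)
  fix \<epsilon> :: real assume \<epsilon>: "\<epsilon> > 0"
  obtain m where m: "m > 0" "\<And>x. norm x = 1 \<Longrightarrow> m \<le> norm (hpoly D PL x, hpoly D QL x)"
    by (rule hom_rep_lower_bound[OF RL]) (rule that)
  define e where "e j = (\<Sum>k\<le>D. cmod (coeff (P j) k - coeff PL k))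
      + (\<Sum>k\<le>D. cmod (coeff (Q j) k - coeff QL k))" for j
  have "e \<longlonglongrightarrow> (\<Sum>k\<le>D. cmod (coeff PL k - coeff PL k)) + (\<Sum>k\<le>D. cmod (coeff QL k - coeff QL k))"
    unfolding e_def by (intro tendsto_intros cP cQ)
  then have "eventually (\<lambda>j. e j < min (m / 2) (\<epsilon> * m / 8)) sequentially"
    using \<epsilon> m(1) by (intro order_tendstoD(2)) auto
  then show "eventually (\<lambda>j. \<forall>y. sdist (h j y) (g y) < \<epsilon>) sequentially"
  proof eventually_elim
    case (elim j)
    show "\<forall>y. sdist (h j y) (g y) < \<epsilon>"
    proof
      fix y
      obtain x where x: "norm x = 1" "hproj x = y" using hproj_surj_sphere by blast
      define a where "a = (hpoly D (P j) x, hpoly D (Q j) x)"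
      define A where "A = (hpoly D PL x, hpoly D QL x)"
      have "x \<noteq> 0" using x(1) by auto
      then have a: "a \<noteq> 0" "h j y = hproj a" and A: "A \<noteq> 0" "g y = hproj A"
        using R[of j] RL unfolding hom_rep_def a_def A_def x(2)[symmetric] by blast+
      have aA: "norm (a - A) \<le> e j"
        unfolding a_def A_def e_def using x(1) by (intro hpoly_pair_norm_diff_le) simp
      have "m / 2 \<le> norm a"
        using norm_triangle_sub[of A a] aA m(2)[OF x(1)] elim by (simp add: A_def norm_minus_commute)
      moreover have "0 \<le> e j" using aA norm_ge_zero order_trans by blast
      ultimately have "4 * norm (a - A) / norm a \<le> 4 * e j / (m / 2)"
        using aA m(1) by (intro frac_le) auto
      also have "\<dots> < \<epsilon>" using elim m(1) by (simp add: field_simps)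
      finally show "sdist (h j y) (g y) < \<epsilon>"
        using sdist_hproj_le[OF a(1) A(1)] a(2) A(2) by simp
    qed
  qed
qed

lemma convergent_subseq_family:
  fixes a :: "nat \<Rightarrow> nat \<Rightarrow> complex"
  assumes B: "\<And>n k. cmod (a n k) \<le> B"
  shows "\<exists>r. strict_mono r \<and> (\<forall>k<N. convergent (\<lambda>j. a (r j) k))"
proof (induction N)
  case 0
  then show ?case using strict_mono_id by blast
next
  case (Suc N)
  then obtain r where r: "strict_mono r" "\<forall>k<N. convergent (\<lambda>j. a (r j) k)" by blast
  have "bounded (range (\<lambda>j. a (r j) N))" using B by (auto simp: bounded_iff)
  then obtain l r' where r': "strict_mono r'" "((\<lambda>j. a (r j) N) \<circ> r') \<longlonglongrightarrow> l"
    using bounded_imp_convergent_subsequence by blast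
  have "convergent (\<lambda>j. a (r (r' j)) k)" if "k < Suc N" for k
    using convergent_subseq_convergent[OF r(2)[rule_format] r'(1)] r'(2) that
    by (cases "k < N") (auto simp: convergent_def o_def less_Suc_eq)
  then show ?case using strict_mono_o[OF r(1) r'(1)] unfolding o_def by blast
qed

lemma convergent_subseq_poly:
  fixes P :: "nat \<Rightarrow> complex poly"
  assumes d: "\<And>n. degree (P n) \<le> D" and B: "\<And>n k. cmod (coeff (P n) k) \<le> B"
  obtains r L where "strict_mono r" "degree L \<le> D" "\<And>k. (\<lambda>j. coeff (P (r j)) k) \<longlonglongrightarrow> coeff L k"
proof -
  obtain r where r: "strict_mono r" "\<And>k. k \<le> D \<Longrightarrow> convergent (\<lambda>j. coeff (P (r j)) k)"
    using convergent_subseq_family[of "\<lambda>n k. coeff (P n) k", OF B, of "Suc D"] by auto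
  define L where "L = (\<Sum>k\<le>D. monom (lim (\<lambda>j. coeff (P (r j)) k)) k)"
  have dL: "degree L \<le> D" unfolding L_def by (intro degree_sum_le) (auto intro: order.trans[OF degree_monom_le])
  have cL: "(\<lambda>j. coeff (P (r j)) k) \<longlonglongrightarrow> coeff L k" for k
  proof (cases "k \<le> D")
    case True
    then show ?thesis using r(2) by (simp add: L_def coeff_sum coeff_monom convergent_LIMSEQ_iff)
  next
    case False
    then have "coeff (P (r j)) k = 0" for j using d[of "r j"] by (simp add: coeff_eq_0)
    then show ?thesis using False by (simp add: L_def coeff_sum coeff_monom)
  qed
  show ?thesis by (rule that[OF r(1) dL cL])
qed

lemma convergent_subseq_normalized_pair:
  fixes P Q :: "nat \<Rightarrow> complex poly"
  assumes dP: "\<And>n. degree (P n) \<le> D" and dQ: "\<And>n. degree (Q n) \<le> D"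
    and N: "\<And>n. coeff_norm D (P n) (Q n) = 1"
  obtains r PL QL where "strict_mono r" "degree PL \<le> D" "degree QL \<le> D" "PL \<noteq> 0 \<or> QL \<noteq> 0"
    "\<And>k. (\<lambda>j. coeff (P (r j)) k) \<longlonglongrightarrow> coeff PL k"
    "\<And>k. (\<lambda>j. coeff (Q (r j)) k) \<longlonglongrightarrow> coeff QL k"
proof -
  have B: "cmod (coeff (P n) k) \<le> 1 \<and> cmod (coeff (Q n) k) \<le> 1" for n k
  proof (cases "k \<le> D")
    case True
    then have "cmod (coeff (P n) k) + cmod (coeff (Q n) k) \<le> coeff_norm D (P n) (Q n)"
      unfolding coeff_norm_def
      by (intro member_le_sum[of k "{..D}" "\<lambda>k. cmod (coeff (P n) k) + cmod (coeff (Q n) k)"]) auto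
    then show ?thesis using N[of n] by (smt (verit) norm_ge_zero)
  next
    case False
    then show ?thesis using dP[of n] dQ[of n] by (simp add: coeff_eq_0)
  qed
  obtain r1 PL where r1: "strict_mono r1" "degree PL \<le> D"
    and cP: "\<And>k. (\<lambda>j. coeff (P (r1 j)) k) \<longlonglongrightarrow> coeff PL k"
    by (rule convergent_subseq_poly[OF dP conjunct1[OF B]]) (rule that)
  obtain r2 QL where r2: "strict_mono r2" "degree QL \<le> D"
    and cQ: "\<And>k. (\<lambda>j. coeff (Q (r1 (r2 j))) k) \<longlonglongrightarrow> coeff QL k"
    by (rule convergent_subseq_poly[of "\<lambda>n. Q (r1 n)", OF dQ conjunct2[OF B]]) (rule that)
  have cP': "(\<lambda>j. coeff (P (r1 (r2 j))) k) \<longlonglongrightarrow> coeff PL k" for k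
    using LIMSEQ_subseq_LIMSEQ[OF cP r2(1)] by (simp add: o_def)
  have "(\<lambda>j. coeff_norm D (P (r1 (r2 j))) (Q (r1 (r2 j)))) \<longlonglongrightarrow> coeff_norm D PL QL"
    unfolding coeff_norm_def by (intro tendsto_intros cP' cQ)
  then have "coeff_norm D PL QL = 1" using N by (simp add: LIMSEQ_const_iff)
  then have "PL \<noteq> 0 \<or> QL \<noteq> 0" by (auto simp: coeff_norm_def)
  from that[OF strict_mono_o[OF r1(1) r2(1)] r1(2) r2(2) this] cP' cQ show ?thesis by (simp add: o_def)
qed

lemma limit_forms_cross_root:
  assumes R: "\<And>j. hom_rep D (P j) (Q j) (h j)" and Rg: "hom_rep D p q g"
    and d: "degree PL \<le> D" "degree QL \<le> D" "degree p \<le> D" "degree q \<le> D"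
    and cP: "\<And>k. (\<lambda>j. coeff (P j) k) \<longlonglongrightarrow> coeff PL k"
    and cQ: "\<And>k. (\<lambda>j. coeff (Q j) k) \<longlonglongrightarrow> coeff QL k"
    and pw: "(\<lambda>j. sdist (h j (Some z)) (g (Some z))) \<longlonglongrightarrow> 0"
    and nz: "poly PL z \<noteq> 0 \<or> poly QL z \<noteq> 0"
  shows "poly (PL * q - QL * p) z = 0"
proof -
  define a where "a j = (hpoly D (P j) (z, 1), hpoly D (Q j) (z, 1))" for j
  define l where "l = (hpoly D PL (z, 1), hpoly D QL (z, 1))"
  define b where "b = (hpoly D p (z, 1), hpoly D q (z, 1))"
  have x: "(z, 1::complex) \<noteq> 0" and hx: "hproj (z, 1) = Some z"
    by (simp_all add: hproj_def zero_prod_def)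
  have lim: "a \<longlonglongrightarrow> l" unfolding a_def l_def hpoly_def by (intro tendsto_intros cP cQ)
  have l: "l \<noteq> 0" using nz d by (simp add: l_def hpoly_Pair_1 Pair_neq_0_iff)
  have a: "a j \<noteq> 0" "h j (Some z) = hproj (a j)" for j
    using R x unfolding a_def hom_rep_def hx[symmetric] by blast+
  have b: "b \<noteq> 0" "g (Some z) = hproj b"
    using Rg x unfolding b_def hom_rep_def hx[symmetric] by blast+
  have "hproj l = hproj b"
    by (rule hproj_eq_of_tendsto[OF lim l a(1) b(1)]) (use pw in \<open>simp add: a(2) b(2)\<close>)
  then have "hdet l b = 0" using hproj_eq_iff[OF l b(1)] by simp
  then show ?thesis using d by (simp add: l_def b_def hpoly_Pair_1 hdet_def algebra_simps)
qed

lemma limit_forms_cross_eq: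
  assumes R: "\<And>j. hom_rep D (P j) (Q j) (h j)" and Rg: "hom_rep D p q g"
    and d: "degree PL \<le> D" "degree QL \<le> D" "degree p \<le> D" "degree q \<le> D"
    and PQL: "PL \<noteq> 0 \<or> QL \<noteq> 0"
    and cP: "\<And>k. (\<lambda>j. coeff (P j) k) \<longlonglongrightarrow> coeff PL k"
    and cQ: "\<And>k. (\<lambda>j. coeff (Q j) k) \<longlonglongrightarrow> coeff QL k"
    and X: "finite X"
    and pw: "\<And>z. Some z \<notin> X \<Longrightarrow> (\<lambda>j. sdist (h j (Some z)) (g (Some z))) \<longlonglongrightarrow> 0"
  shows "PL * q = QL * p"
proof -
  \<comment> \<open>The cross polynomial vanishes off the finite set of attaching points and common zeros.\<close>
  have "finite {z. poly PL z = 0 \<and> poly QL z = 0}"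
  proof (cases "PL = 0")
    case False
    from poly_roots_finite[OF False] show ?thesis by (rule finite_subset[rotated]) auto
  next
    case True
    then have "QL \<noteq> 0" using PQL by simp
    from poly_roots_finite[OF this] show ?thesis by (rule finite_subset[rotated]) auto
  qed
  moreover have "finite (Some -` X)" using X by (rule finite_vimageI) (simp add: inj_def)
  ultimately have "infinite (- (Some -` X \<union> {z. poly PL z = 0 \<and> poly QL z = 0}))"
    by (simp add: Compl_eq_Diff_UNIV Diff_infinite_finite infinite_UNIV_char_0)
  moreover have "- (Some -` X \<union> {z. poly PL z = 0 \<and> poly QL z = 0}) \<subseteq> {z. poly (PL * q - QL * p) z = 0}"
    using limit_forms_cross_root[OF R Rg d cP cQ pw] by auto
  ultimately have "infinite {z. poly (PL * q - QL * p) z = 0}" by (rule infinite_super[rotated])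
  then have "PL * q - QL * p = 0" using poly_roots_finite by blast
  then show ?thesis by simp
qed

lemma proportional_if_cross_eq:
  fixes p q PL QL :: "complex poly"
  assumes eq: "PL * q = QL * p" and cp: "coprime p q"
    and md: "max (degree p) (degree q) = D" "D \<ge> 1"
    and d: "degree PL \<le> D" "degree QL \<le> D" and nz: "PL \<noteq> 0 \<or> QL \<noteq> 0"
  obtains c where "c \<noteq> 0" "PL = smult c p" "QL = smult c q"
proof -
  have unit_degree: "degree r = 0" if "is_unit r" for r :: "complex poly"
    using that is_unit_iff_degree[of r] by (cases "r = 0") auto
  have "p \<noteq> 0" using cp md unit_degree[of q] by auto
  moreover have "q \<noteq> 0" using cp md unit_degree[of p] by auto
  ultimately have "p \<noteq> 0" "q \<noteq> 0" by blast+
  have "p dvd PL * q" using eq by simp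
  then obtain k where k: "PL = p * k" using cp by (auto simp: coprime_dvd_mult_left_iff elim: dvdE)
  then have "p * (q * k) = p * QL" using eq by (simp add: algebra_simps)
  then have Q: "QL = q * k" using \<open>p \<noteq> 0\<close> by simp
  have "k \<noteq> 0" using nz k Q by auto
  then have "degree p + degree k \<le> D" "degree q + degree k \<le> D"
    using d k Q \<open>p \<noteq> 0\<close> \<open>q \<noteq> 0\<close> by (simp_all add: degree_mult_eq)
  then have "degree k = 0" using md by linarith
  then have kc: "k = [:coeff k 0:]" by (rule degree_0_id[symmetric])
  then have "coeff k 0 \<noteq> 0" using \<open>k \<noteq> 0\<close> by (metis pCons_0_0)
  moreover have "PL = smult (coeff k 0) p" "QL = smult (coeff k 0) q"
    unfolding k Q by (subst kc; simp)+
  ultimately show ?thesis by (rule that)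
qed

lemma eventually_sequentially_if_subseq:
  assumes "\<And>s :: nat \<Rightarrow> nat. strict_mono s \<Longrightarrow> \<exists>r. strict_mono r \<and> eventually (\<lambda>j. P (s (r j))) sequentially"
  shows "eventually P sequentially"
proof (rule ccontr)
  assume "\<not> eventually P sequentially"
  then have "frequently (\<lambda>n. \<not> P n) sequentially" by (simp add: not_eventually)
  then have "infinite {n. \<not> P n}"
    unfolding cofinite_eq_sequentially[symmetric] frequently_cofinite by simp
  then obtain s :: "nat \<Rightarrow> nat" where s: "strict_mono s" "\<forall>n. s n \<in> {n. \<not> P n}"
    using infinite_enumerate by blast
  obtain r where "eventually (\<lambda>j. P (s (r j))) sequentially" using assms[OF s(1)] by blast
  then obtain j where "P (s (r j))" by (meson eventually_sequentially order_refl)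
  then show False using s(2) by blast
qed

lemma unif_conv_if_subseq:
  assumes "\<And>s :: nat \<Rightarrow> nat. strict_mono s \<Longrightarrow> \<exists>r. strict_mono r \<and> unif_conv (\<lambda>j. gs (s (r j))) g"
  shows "unif_conv gs g"
  unfolding unif_conv_def
proof (intro allI impI)
  fix \<epsilon> :: real assume "\<epsilon> > 0"
  show "eventually (\<lambda>n. \<forall>q. sdist (gs n q) (g q) < \<epsilon>) sequentially"
  proof (rule eventually_sequentially_if_subseq)
    fix s :: "nat \<Rightarrow> nat" assume "strict_mono s"
    then obtain r :: "nat \<Rightarrow> nat" where "strict_mono r" "unif_conv (\<lambda>j. gs (s (r j))) g"
      using assms by blast
    then show "\<exists>r. strict_mono r \<and> eventually (\<lambda>j. \<forall>q. sdist (gs (s (r j)) q) (g q) < \<epsilon>) sequentially"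
      using \<open>\<epsilon> > 0\<close> unfolding unif_conv_def by blast
  qed
qed

lemma unif_conv_of_normalized_hom_reps:
  assumes dP: "\<And>n. degree (P n) \<le> D" and dQ: "\<And>n. degree (Q n) \<le> D"
    and R: "\<And>n. hom_rep D (P n) (Q n) (h n)" and N: "\<And>n. coeff_norm D (P n) (Q n) = 1"
    and cp: "coprime p q" and md: "max (degree p) (degree q) = D" and D: "D \<ge> 1"
    and X: "finite X"
    and pw: "\<And>z. Some z \<notin> X \<Longrightarrow> (\<lambda>n. sdist (h n (Some z)) (rat_eval p q (Some z))) \<longlonglongrightarrow> 0"
  shows "unif_conv h (rat_eval p q)"
proof (rule unif_conv_if_subseq)
  fix s :: "nat \<Rightarrow> nat" assume s: "strict_mono s"
  obtain r PL QL where r: "strict_mono r" and d: "degree PL \<le> D" "degree QL \<le> D"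
    and nz: "PL \<noteq> 0 \<or> QL \<noteq> 0"
    and cP: "\<And>k. (\<lambda>j. coeff (P (s (r j))) k) \<longlonglongrightarrow> coeff PL k"
    and cQ: "\<And>k. (\<lambda>j. coeff (Q (s (r j))) k) \<longlonglongrightarrow> coeff QL k"
    by (rule convergent_subseq_normalized_pair[of "\<lambda>n. P (s n)" D "\<lambda>n. Q (s n)", OF dP dQ N]) (rule that)
  have Rsr: "hom_rep D (P (s (r j))) (Q (s (r j))) (h (s (r j)))" for j by (rule R)
  have Rpq: "hom_rep D p q (rat_eval p q)" by (rule hom_rep_rat_eval[OF cp md D])
  have "(\<lambda>j. sdist (h (s (r j)) (Some z)) (rat_eval p q (Some z))) \<longlonglongrightarrow> 0" if "Some z \<notin> X" for z
    using LIMSEQ_subseq_LIMSEQ[OF pw[OF that] strict_mono_o[OF s r]] by (simp add: o_def)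
  then have "PL * q = QL * p"
    using limit_forms_cross_eq[OF Rsr Rpq d _ _ nz cP cQ X] md by auto
  then obtain c where "c \<noteq> 0" "PL = smult c p" "QL = smult c q"
    by (rule proportional_if_cross_eq[OF _ cp md D d nz]) (rule that)
  then have "hom_rep D PL QL (rat_eval p q)" using hom_rep_smult[OF Rpq] by simp
  then show "\<exists>r. strict_mono r \<and> unif_conv (\<lambda>j. h (s (r j))) (rat_eval p q)"
    using unif_conv_of_coeff_tendsto[OF Rsr _ cP cQ] r by blast
qed

section \<open>Vertices of full degree\<close>

lemma rat_rep_eq:
  assumes "rational_map d g"
  shows "coprime (fst (rat_rep g)) (snd (rat_rep g))" "g = rat_eval (fst (rat_rep g)) (snd (rat_rep g))"
proof -
  have "\<exists>pq. case pq of (p, q) \<Rightarrow> coprime p q \<and> max (degree p) (degree q) \<ge> 1 \<and> g = rat_eval p q"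
    using assms unfolding rational_map_def by auto
  then have "case rat_rep g of (p, q) \<Rightarrow> coprime p q \<and> max (degree p) (degree q) \<ge> 1 \<and> g = rat_eval p q"
    unfolding rat_rep_def by (rule someI_ex)
  then show "coprime (fst (rat_rep g)) (snd (rat_rep g))" "g = rat_eval (fst (rat_rep g)) (snd (rat_rep g))"
    by (simp_all add: case_prod_beta)
qed

lemma holo_cover_vertex_map:
  assumes cover: "holo_cover VY EY Y iY VZ EZ Z iZ F f"
    and v: "v \<in> VY - Y" and deg: "vdeg EY Y iY f v = D"
  obtains p q where "coprime p q" "max (degree p) (degree q) = D" "f v = rat_eval p q"
proof -
  have "\<forall>u\<in>VY - Y. \<exists>d. rational_map d (f u)" using cover unfolding holo_cover_def by meson
  then obtain d where "rational_map d (f v)" using v by blast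
  moreover have "max (degree (fst (rat_rep (f v)))) (degree (snd (rat_rep (f v)))) = D"
    using v deg unfolding vdeg_def rat_degree_def by (simp add: case_prod_beta)
  ultimately show ?thesis using that rat_rep_eq by blast
qed

lemma finite_Xset:
  assumes "tree_of_spheres V E X i" "v \<in> V - X"
  shows "finite (Xset E i v)"
proof -
  have "card (edges_at E v) \<ge> 3" using assms unfolding tree_of_spheres_def by blast
  then have "finite (edges_at E v)" by (metis card.infinite not_numeral_le_zero)
  then show ?thesis unfolding Xset_def by simp
qed

lemma sconv_of_loc_unif_conv:
  assumes "loc_unif_conv U gs g" "y \<in> U"
  shows "(\<lambda>n. sdist (gs n y) (g y)) \<longlonglongrightarrow> 0"
proof (rule tendstoI)
  fix \<epsilon> :: real assume "\<epsilon> > 0"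
  obtain r where "r > 0"
    and ev: "eventually (\<lambda>n. \<forall>q. sdist y q < r \<longrightarrow> sdist (gs n q) (g q) < \<epsilon>) sequentially"
    using assms \<open>\<epsilon> > 0\<close> unfolding loc_unif_conv_def by blast
  from ev show "eventually (\<lambda>n. dist (sdist (gs n y) (g y)) 0 < \<epsilon>) sequentially"
    by eventually_elim (use \<open>r > 0\<close> sdist_nonneg in auto)
qed

theorem lemma4p12:
  fixes VY :: "'v set" and EY :: "'v set set" and Y :: "'v set"
    and iY :: "'v \<Rightarrow> 'v set \<Rightarrow> csphere"
    and VZ :: "'w set" and EZ :: "'w set set" and Z :: "'w set"
    and iZ :: "'w \<Rightarrow> 'w set \<Rightarrow> csphere"
    and F :: "'v \<Rightarrow> 'w" and f :: "'v \<Rightarrow> csphere \<Rightarrow> csphere" and D :: nat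
    and gs :: "nat \<Rightarrow> csphere \<Rightarrow> csphere"
    and ys :: "nat \<Rightarrow> 'v \<Rightarrow> csphere" and zs :: "nat \<Rightarrow> 'w \<Rightarrow> csphere"
    and phiY :: "nat \<Rightarrow> 'v \<Rightarrow> csphere \<Rightarrow> csphere"
    and phiZ :: "nat \<Rightarrow> 'w \<Rightarrow> csphere \<Rightarrow> csphere"
    and v :: 'v
  assumes "holo_cover_deg VY EY Y iY VZ EZ Z iZ F f D"
    and "v \<in> VY - Y"
    and "vdeg EY Y iY f v = D"
    and "converges_to_cover VY EY Y iY VZ EZ Z iZ F f D gs ys zs phiY phiZ"
  shows "unif_conv (\<lambda>n. phiZ n (F v) \<circ> gs n \<circ> inv (phiY n v)) (f v)"
proof -
  have cover: "holo_cover VY EY Y iY VZ EZ Z iZ F f"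
    using assms(1) unfolding holo_cover_deg_def by blast
  obtain p q where cp: "coprime p q" and md: "max (degree p) (degree q) = D" and fv: "f v = rat_eval p q"
    by (rule holo_cover_vertex_map[OF cover assms(2,3)]) (rule that)
  have "\<forall>n. marked_rat Y Z F (vdeg EY Y iY f) D (gs n) (ys n) (zs n)"
    and "\<forall>u\<in>VY - Y. (\<forall>n. moebius (phiY n u) \<and> moebius (phiZ n (F u))) \<and>
      loc_unif_conv (- Xset EY iY u) (\<lambda>n. phiZ n (F u) \<circ> gs n \<circ> inv (phiY n u)) (f u)"
    using assms(4) unfolding converges_to_cover_def by meson+
  then have gs: "rational_map D (gs n)" and mob: "moebius (phiY n v)" "moebius (phiZ n (F v))"
    and luc: "loc_unif_conv (- Xset EY iY v) (\<lambda>n. phiZ n (F v) \<circ> gs n \<circ> inv (phiY n v)) (f v)" for n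
    using assms(2) unfolding marked_rat_def by blast+
  have "D \<ge> 1" using gs[of 0] unfolding rational_map_def by blast
  have "tree_of_spheres VY EY Y iY" using cover unfolding holo_cover_def by (elim conjE)
  then have X: "finite (Xset EY iY v)" using assms(2) by (rule finite_Xset)
  obtain P Q where "\<And>n. degree (P n) \<le> D" "\<And>n. degree (Q n) \<le> D"
    "\<And>n. hom_rep D (P n) (Q n) (phiZ n (F v) \<circ> gs n \<circ> inv (phiY n v))"
    "\<And>n. coeff_norm D (P n) (Q n) = 1"
    by (rule normalized_hom_reps_moebius_conj[where g = gs and \<phi> = "\<lambda>n. phiZ n (F v)"
          and \<psi> = "\<lambda>n. phiY n v", OF gs mob(2) mob(1)]) (rule that)
  from unif_conv_of_normalized_hom_reps[where h = "\<lambda>n. phiZ n (F v) \<circ> gs n \<circ> inv (phiY n v)",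
      OF this cp md \<open>D \<ge> 1\<close> X] sconv_of_loc_unif_conv[OF luc]
  show ?thesis unfolding fv by simp
qed

end
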